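(* For every forward trie $\mathsf{T}_f$ with $n$ nodes over an alphabet of size $\sigma$, the minimal deterministic finite automaton accepting $\mathrm{Suffix}(\mathsf{T}_f)$ has $O(\sigma n)$ transitions. Moreover, for some forward tries $\mathsf{T}_f$ with $n$ nodes, this minimal DFA has $\Omega(\sigma n)$ transitions, which is $\Omega(n^2)$ for an alphabet of size $\sigma=\Theta(n)$. The same upper and lower bounds hold for the minimal DFA accepting $\mathrm{Substr}(\mathsf{T}_f)$.
   Context: An alphabet $\Sigma$ is a finite ordered set of characters, and $\sigma=|\Sigma|$. A forward trie $\mathsf{T}_f$ is a rooted tree with $n$ nodes in which every edge is directed from parent to child and labeled by a single character of $\Sigma$, such that the edges leaving any node carry pairwise distinct labels. For nodes $u,v$ with $u$ an ancestor of $v$ (possibly $u=v$), $\mathrm{str}_f(u,v)$ is the string of labels read along the downward path from $u$ to $v$. Define $\mathrm{Substr}(\mathsf{T}_f)=\{\mathrm{str}_f(u,v): u \text{ an ancestor of } v\}$ and $\mathrm{Suffix}(\mathsf{T}_f)=\{\mathrm{str}_f(u,\ell): \ell \text{ a leaf},\ u \text{ an ancestor of } \ell\}$. DFAs are partial (transitions to a dead state are not counted). *)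

theory Defs
  imports Complex_Main
begin

text \<open>A forward trie over alphabet Alph: finite node set V, root r, parent function par
  (meaningful on V - {r}), and label function lab: the edge from par v to v carries lab v.\<close>

definition is_trie :: "'a set \<Rightarrow> 'v set \<Rightarrow> 'v \<Rightarrow> ('v \<Rightarrow> 'v) \<Rightarrow> ('v \<Rightarrow> 'a) \<Rightarrow> bool" where
  "is_trie Alph V r par lab \<longleftrightarrow>
     finite V \<and> r \<in> V \<and>
     (\<forall>v\<in>V. v \<noteq> r \<longrightarrow> par v \<in> V \<and> lab v \<in> Alph) \<and>
     (\<forall>v\<in>V. \<exists>k. (par ^^ k) v = r) \<and>
     (\<forall>v\<in>V - {r}. \<forall>w\<in>V - {r}. par v = par w \<and> lab v = lab w \<longrightarrow> v = w)"

text \<open>tpath V r par lab u v s: u is an ancestor of v (or u = v) and s = str_f(u,v).\<close>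
inductive tpath :: "'v set \<Rightarrow> 'v \<Rightarrow> ('v \<Rightarrow> 'v) \<Rightarrow> ('v \<Rightarrow> 'a) \<Rightarrow> 'v \<Rightarrow> 'v \<Rightarrow> 'a list \<Rightarrow> bool"
  for V r par lab where
  refl: "u \<in> V \<Longrightarrow> tpath V r par lab u u []"
| step: "tpath V r par lab u (par v) s \<Longrightarrow> v \<in> V \<Longrightarrow> v \<noteq> r \<Longrightarrow> tpath V r par lab u v (s @ [lab v])"

definition is_leaf :: "'v set \<Rightarrow> 'v \<Rightarrow> ('v \<Rightarrow> 'v) \<Rightarrow> 'v \<Rightarrow> bool" where
  "is_leaf V r par l \<longleftrightarrow> l \<in> V \<and> \<not> (\<exists>w\<in>V. w \<noteq> r \<and> par w = l)"

definition Substr :: "'v set \<Rightarrow> 'v \<Rightarrow> ('v \<Rightarrow> 'v) \<Rightarrow> ('v \<Rightarrow> 'a) \<Rightarrow> 'a list set" where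
  "Substr V r par lab = {s. \<exists>u v. tpath V r par lab u v s}"

definition Suffix :: "'v set \<Rightarrow> 'v \<Rightarrow> ('v \<Rightarrow> 'v) \<Rightarrow> ('v \<Rightarrow> 'a) \<Rightarrow> 'a list set" where
  "Suffix V r par lab = {s. \<exists>u l. is_leaf V r par l \<and> tpath V r par lab u l s}"

record 'a dfa =
  states :: "nat set"
  init :: nat
  delta :: "nat \<Rightarrow> 'a \<Rightarrow> nat option"
  finals :: "nat set"

definition is_dfa :: "'a set \<Rightarrow> 'a dfa \<Rightarrow> bool" where
  "is_dfa Alph M \<longleftrightarrow> finite (states M) \<and> init M \<in> states M \<and> finals M \<subseteq> states M \<and>
     (\<forall>q\<in>states M. \<forall>a q'. delta M q a = Some q' \<longrightarrow> a \<in> Alph \<and> q' \<in> states M)"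

fun delta_star :: "'a dfa \<Rightarrow> nat \<Rightarrow> 'a list \<Rightarrow> nat option" where
  "delta_star M q [] = Some q"
| "delta_star M q (a # w) = (case delta M q a of None \<Rightarrow> None | Some q' \<Rightarrow> delta_star M q' w)"

definition dfa_lang :: "'a dfa \<Rightarrow> 'a list set" where
  "dfa_lang M = {w. \<exists>q. delta_star M (init M) w = Some q \<and> q \<in> finals M}"

definition ntrans :: "'a dfa \<Rightarrow> nat" where
  "ntrans M = card {(q, a). q \<in> states M \<and> delta M q a \<noteq> None}"

definition minimal_dfa :: "'a set \<Rightarrow> 'a list set \<Rightarrow> 'a dfa \<Rightarrow> bool" where
  "minimal_dfa Alph L M \<longleftrightarrow> is_dfa Alph M \<and> dfa_lang M = L \<and>
     (\<forall>M'. is_dfa Alph M' \<and> dfa_lang M' = L \<longrightarrow> card (states M) \<le> card (states M'))"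

end

theory Submission
  imports Defs "HOL-Library.Countable_Set"
begin

text \<open>Upper bound (Myhill--Nerode): the minimal DFA of a language \<open>L\<close> has no more states than
  \<open>L\<close> has nonempty left quotients, plus one. For a language of labels of downward paths in a
  trie, the quotient by \<open>x\<close> depends only on the set of nodes at which an occurrence of \<open>x\<close> ends.
  Any two such sets are disjoint or nested, so they form a laminar family of subsets of the \<open>n\<close>
  nodes and there are at most \<open>2n\<close> of them; hence at most \<open>3n\<close> states and \<open>3\<sigma>n\<close> transitions.

  Lower bound: in a broom, a path of \<open>m\<close> edges labelled \<open>0\<close> followed by \<open>s\<close> leaves with
  pairwise distinct labels \<open>1, \<dots>, s\<close>, the prefixes \<open>0\<^sup>i\<close> (\<open>i \<le> m\<close>) lead to pairwise distinct
  states and each of these states needs a transition on every letter \<open>c \<le> s\<close>. With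
  \<open>m \<approx> n/2\<close> and \<open>s \<approx> min \<sigma> (n/2)\<close> this gives at least \<open>\<sigma>n/8\<close> transitions.\<close>

section \<open>Paths in tries\<close>

lemma tpath_nodes: "tpath V r par lab u v s \<Longrightarrow> u \<in> V \<and> v \<in> V"
  by (induction rule: tpath.induct) auto

lemma tpath_in_lists: "tpath V r par lab u v s \<Longrightarrow> is_trie Alph V r par lab \<Longrightarrow> s \<in> lists Alph"
  by (induction rule: tpath.induct) (auto simp: is_trie_def)

lemma tpath_append:
  assumes "tpath V r par lab u v x" and "tpath V r par lab v w y"
  shows "tpath V r par lab u w (x @ y)"
  using assms(2,1)
proof (induction rule: tpath.induct)
  case (step v v' s)
  then have "tpath V r par lab u v' ((x @ s) @ [lab v'])" by (intro tpath.step) simp_all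
  then show ?case by simp
qed simp

lemma tpath_split:
  assumes "tpath V r par lab u w (x @ y)"
  shows "\<exists>v. tpath V r par lab u v x \<and> tpath V r par lab v w y"
proof -
  have "\<exists>v. tpath V r par lab u v x \<and> tpath V r par lab v w y"
    if "tpath V r par lab u w z" "z = x @ y" for w z y
    using that
  proof (induction arbitrary: y rule: tpath.induct)
    case refl
    then show ?case by (auto intro: tpath.refl)
  next
    case (step u w s)
    show ?case
    proof (cases y rule: rev_cases)
      case Nil
      with step show ?thesis by (auto intro: tpath.refl tpath.step)
    next
      case (snoc y' a)
      with step obtain v where "tpath V r par lab u v x" "tpath V r par lab v (par w) y'" by auto
      with step snoc show ?thesis by (auto intro: tpath.step)
    qed
  qed
  with assms show ?thesis by blast
qed

lemma tpath_snocD: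
  "tpath V r par lab u v (s @ [a]) \<Longrightarrow> v \<in> V \<and> v \<noteq> r \<and> lab v = a \<and> tpath V r par lab u (par v) s"
  by (cases rule: tpath.cases) auto

text \<open>Both strings are read off the unique upward path from the common end node.\<close>
lemma tpath_same_end_suffix:
  "tpath V r par lab u v x \<Longrightarrow> tpath V r par lab u' v y \<Longrightarrow> length x \<le> length y
    \<Longrightarrow> \<exists>z. y = z @ x"
proof (induction arbitrary: u' y rule: tpath.induct)
  case (step u v s)
  then obtain y' b where "y = y' @ [b]" by (cases y rule: rev_cases) auto
  with step.prems have "y = y' @ [lab v]" "tpath V r par lab u' (par v) y'"
    using tpath_snocD by fastforce+
  with step show ?case by fastforce
qed simp

section \<open>Laminar families\<close>

definition laminar :: "'a set set \<Rightarrow> bool" where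
  "laminar F \<longleftrightarrow> (\<forall>S\<in>F. \<forall>T\<in>F. S \<inter> T = {} \<or> S \<subseteq> T \<or> T \<subseteq> S)"

lemma laminarD: "laminar F \<Longrightarrow> S \<in> F \<Longrightarrow> T \<in> F \<Longrightarrow> S \<inter> T = {} \<or> S \<subseteq> T \<or> T \<subseteq> S"
  unfolding laminar_def by blast

lemma laminar_subset: "laminar F \<Longrightarrow> G \<subseteq> F \<Longrightarrow> laminar G"
  unfolding laminar_def by blast

lemma laminar_image_Diff_singleton: "laminar F \<Longrightarrow> laminar ((\<lambda>S. S - {x}) ` F)"
  unfolding laminar_def by blast

lemma laminar_Diff_singleton_eq:
  assumes "laminar F" "{} \<notin> F" "S1 \<in> F" "S2 \<in> F" "x \<in> S1" "x \<in> S2"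
    and "S1 - {x} \<in> F" "S2 - {x} \<in> F"
  shows "S1 - {x} = S2 - {x}"
proof -
  have eq_if_le: "T - {x} = S - {x}"
    if "S \<in> F" "S - {x} \<in> F" "T - {x} \<in> F" "x \<in> S" "S \<subseteq> T" for S T
  proof -
    have "S - {x} \<noteq> {}" using \<open>{} \<notin> F\<close> that(2) by metis
    then have "S \<inter> (T - {x}) \<noteq> {}" using \<open>S \<subseteq> T\<close> by blast
    moreover have "\<not> S \<subseteq> T - {x}" using \<open>x \<in> S\<close> by blast
    ultimately have "T - {x} \<subseteq> S" using laminarD[OF \<open>laminar F\<close> that(1,3)] by blast
    with \<open>S \<subseteq> T\<close> show ?thesis by blast
  qed
  have "S1 \<subseteq> S2 \<or> S2 \<subseteq> S1" using laminarD[OF assms(1,3,4)] assms(5,6) by blast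
  then show ?thesis
  proof
    assume "S1 \<subseteq> S2" then show ?thesis using eq_if_le[of S1 S2] assms by simp
  next
    assume "S2 \<subseteq> S1" then show ?thesis using eq_if_le[of S2 S1] assms by simp
  qed
qed

text \<open>Removing a point from the members of a laminar family merges at most one pair of members.\<close>
lemma card_laminar_le_card_image_Diff_singleton:
  assumes "finite F" "laminar F" "{} \<notin> F"
  shows "card F \<le> card ((\<lambda>S. S - {x}) ` F) + 1"
proof -
  define g where "g = (\<lambda>S::'a set. S - {x})"
  define A where "A = {S\<in>F. x \<notin> S}"
  define B where "B = {S\<in>F. x \<in> S}"
  have fin: "finite A" "finite B" using assms(1) unfolding A_def B_def by auto
  have "F = A \<union> B" "A \<inter> B = {}" unfolding A_def B_def by auto
  then have card_F: "card F = card A + card B" using card_Un_disjoint[OF fin] by simp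
  have "g ` F = A \<union> g ` B"
  proof -
    have "g ` A = A" unfolding A_def g_def by auto
    with \<open>F = A \<union> B\<close> show ?thesis by (simp add: image_Un)
  qed
  moreover have "card (g ` B) = card B"
    by (rule card_image) (auto simp: inj_on_def B_def g_def)
  ultimately have "card A + card B = card (g ` F) + card (A \<inter> g ` B)"
    using card_Un_Int[OF fin(1) finite_imageI[OF fin(2), of g]] by simp
  moreover have "card (A \<inter> g ` B) \<le> 1"
  proof -
    have "T1 = T2" if T: "T1 \<in> A \<inter> g ` B" "T2 \<in> A \<inter> g ` B" for T1 T2
    proof -
      obtain S1 S2 where "S1 \<in> F" "S2 \<in> F" "x \<in> S1" "x \<in> S2" "T1 = S1 - {x}" "T2 = S2 - {x}"
        using T unfolding B_def g_def by blast
      moreover have "T1 \<in> F" "T2 \<in> F" using T unfolding A_def by blast+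
      ultimately show ?thesis using laminar_Diff_singleton_eq[OF assms(2,3)] by blast
    qed
    then show ?thesis using card_le_Suc0_iff_eq[of "A \<inter> g ` B"] fin(1) by auto
  qed
  ultimately show ?thesis using card_F unfolding g_def by linarith
qed

lemma card_laminar_le:
  assumes "finite V" "F \<subseteq> Pow V - {{}}" "laminar F"
  shows "card F \<le> 2 * card V"
  using assms
proof (induction V arbitrary: F rule: finite_induct)
  case empty
  then show ?case by auto
next
  case (insert x V)
  define F' where "F' = (\<lambda>S. S - {x}) ` F - {{}}"
  have "F \<subseteq> Pow (insert x V)" using insert.prems(1) by blast
  then have finF: "finite F" by (rule finite_subset) (simp add: insert.hyps(1))
  have "F' \<subseteq> Pow V - {{}}" using insert.prems(1) unfolding F'_def by auto
  moreover have "laminar F'"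
    using laminar_image_Diff_singleton[OF insert.prems(2)] laminar_subset unfolding F'_def by blast
  ultimately have "card F' \<le> 2 * card V" by (rule insert.IH)
  moreover have "card ((\<lambda>S. S - {x}) ` F) \<le> card F' + 1"
  proof -
    have fin: "finite F'" using finF unfolding F'_def by simp
    have "(\<lambda>S. S - {x}) ` F \<subseteq> insert {} F'" unfolding F'_def by blast
    then have "card ((\<lambda>S. S - {x}) ` F) \<le> card (insert {} F')" using fin by (intro card_mono) auto
    also have "\<dots> \<le> card F' + 1" using fin by (simp add: card_insert_if)
    finally show ?thesis .
  qed
  moreover have "card F \<le> card ((\<lambda>S. S - {x}) ` F) + 1"
    using card_laminar_le_card_image_Diff_singleton[OF finF insert.prems(2)] insert.prems(1) by blast
  ultimately show ?case using insert.hyps by simp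
qed

section \<open>Quotient automata\<close>

definition lquot :: "'a list set \<Rightarrow> 'a list \<Rightarrow> 'a list set" where
  "lquot L x = {y. x @ y \<in> L}"

text \<open>\<open>L\<close> itself is included so that the quotient automaton has an initial state even
  for \<open>L = {}\<close>.\<close>
definition quotients :: "'a list set \<Rightarrow> 'a list set set" where
  "quotients L = insert L {lquot L x | x. lquot L x \<noteq> {}}"

definition quotient_dfa :: "'a set \<Rightarrow> 'a list set \<Rightarrow> 'a dfa" where
  "quotient_dfa Alph L =
    (let code = to_nat_on (quotients L); decode = from_nat_into (quotients L) in
     \<lparr>states = code ` quotients L, init = code L,
      delta = (\<lambda>q a. if a \<in> Alph \<and> lquot (decode q) [a] \<noteq> {}
                     then Some (code (lquot (decode q) [a])) else None),
      finals = code ` {K \<in> quotients L. [] \<in> K}\<rparr>)"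

lemma lquot_Nil [simp]: "lquot L [] = L"
  by (simp add: lquot_def)

lemma lquot_lquot [simp]: "lquot (lquot L x) y = lquot L (x @ y)"
  by (simp add: lquot_def)

lemma lquot_Cons_empty: "lquot K [a] = {} \<Longrightarrow> lquot K (a # w) = {}"
  unfolding lquot_def by auto

lemma self_in_quotients: "L \<in> quotients L"
  by (simp add: quotients_def)

lemma lquot_in_quotients:
  assumes "K \<in> quotients L" "lquot K w \<noteq> {}"
  shows "lquot K w \<in> quotients L"
proof -
  have "K = L \<or> (\<exists>x. K = lquot L x)" using assms(1) unfolding quotients_def by blast
  then obtain x where "K = lquot L x" by (metis lquot_Nil)
  then have "lquot K w = lquot L (x @ w)" by simp
  with assms(2) show ?thesis unfolding quotients_def by blast
qed

lemma
  assumes "finite (quotients L)"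
  shows states_quotient_dfa: "states (quotient_dfa Alph L) = to_nat_on (quotients L) ` quotients L"
    and init_quotient_dfa: "init (quotient_dfa Alph L) = to_nat_on (quotients L) L"
    and delta_quotient_dfa: "K \<in> quotients L \<Longrightarrow>
      delta (quotient_dfa Alph L) (to_nat_on (quotients L) K) a =
        (if a \<in> Alph \<and> lquot K [a] \<noteq> {} then Some (to_nat_on (quotients L) (lquot K [a])) else None)"
    and finals_quotient_dfa: "K \<in> quotients L \<Longrightarrow>
      to_nat_on (quotients L) K \<in> finals (quotient_dfa Alph L) \<longleftrightarrow> [] \<in> K"
  using countable_finite[OF assms] by (auto simp: quotient_dfa_def Let_def)

lemma delta_star_quotient_dfa:
  assumes "finite (quotients L)" "K \<in> quotients L" "K \<noteq> {}"
  shows "delta_star (quotient_dfa Alph L) (to_nat_on (quotients L) K) w =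
    (if w \<in> lists Alph \<and> lquot K w \<noteq> {} then Some (to_nat_on (quotients L) (lquot K w)) else None)"
  using assms(2,3)
proof (induction w arbitrary: K)
  case (Cons a w)
  show ?case
  proof (cases "a \<in> Alph \<and> lquot K [a] \<noteq> {}")
    case True
    with Cons.prems have "lquot K [a] \<in> quotients L" by (blast intro: lquot_in_quotients)
    with True Cons show ?thesis by (simp add: delta_quotient_dfa[OF assms(1)])
  next
    case False
    with Cons.prems show ?thesis by (auto simp: delta_quotient_dfa[OF assms(1)] lquot_Cons_empty)
  qed
qed simp

lemma is_dfa_quotient_dfa:
  assumes "finite (quotients L)"
  shows "is_dfa Alph (quotient_dfa Alph L)"
  unfolding is_dfa_def
proof (intro conjI ballI allI impI)
  show "finite (states (quotient_dfa Alph L))"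
    and "init (quotient_dfa Alph L) \<in> states (quotient_dfa Alph L)"
    using assms self_in_quotients[of L] by (simp_all add: states_quotient_dfa init_quotient_dfa)
  show "finals (quotient_dfa Alph L) \<subseteq> states (quotient_dfa Alph L)"
    by (auto simp: quotient_dfa_def Let_def)
  fix q a q'
  assume "q \<in> states (quotient_dfa Alph L)" and q': "delta (quotient_dfa Alph L) q a = Some q'"
  then obtain K where K: "K \<in> quotients L" "q = to_nat_on (quotients L) K"
    by (auto simp: states_quotient_dfa[OF assms])
  with q' show "a \<in> Alph" "q' \<in> states (quotient_dfa Alph L)"
    using lquot_in_quotients[OF K(1)]
    by (auto simp: delta_quotient_dfa[OF assms] states_quotient_dfa[OF assms] split: if_splits)
qed

lemma dfa_lang_quotient_dfa:
  assumes "finite (quotients L)" "L \<subseteq> lists Alph"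
  shows "dfa_lang (quotient_dfa Alph L) = L"
proof (cases "L = {}")
  case True
  then have "finals (quotient_dfa Alph L) = {}" by (auto simp: quotient_dfa_def quotients_def lquot_def Let_def)
  with True show ?thesis by (simp add: dfa_lang_def)
next
  case False
  have "w \<in> dfa_lang (quotient_dfa Alph L) \<longleftrightarrow> w \<in> lists Alph \<and> w \<in> L" for w
    using lquot_in_quotients[OF self_in_quotients, of L w]
    by (auto simp: dfa_lang_def init_quotient_dfa[OF assms(1)] finals_quotient_dfa[OF assms(1)]
        delta_star_quotient_dfa[OF assms(1) self_in_quotients False] lquot_def)
      (metis append_Nil2)
  with assms(2) show ?thesis by blast
qed

lemma card_states_quotient_dfa:
  "finite (quotients L) \<Longrightarrow> card (states (quotient_dfa Alph L)) = card (quotients L)"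
  by (simp add: states_quotient_dfa card_image inj_on_to_nat_on countable_finite)

lemma minimal_dfa_exists:
  assumes "is_dfa Alph M0" "dfa_lang M0 = L"
  shows "\<exists>M. minimal_dfa Alph L M"
  using ex_has_least_nat[of "\<lambda>M. is_dfa Alph M \<and> dfa_lang M = L" M0 "\<lambda>M. card (states M)"] assms
  unfolding minimal_dfa_def by blast

lemma card_states_minimal_dfa_le:
  assumes "minimal_dfa Alph L M" "finite (quotients L)" "L \<subseteq> lists Alph"
  shows "card (states M) \<le> card (quotients L)"
proof -
  have "is_dfa Alph (quotient_dfa Alph L) \<and> dfa_lang (quotient_dfa Alph L) = L"
    using is_dfa_quotient_dfa[OF assms(2)] dfa_lang_quotient_dfa[OF assms(2,3)] by blast
  with assms(1) have "card (states M) \<le> card (states (quotient_dfa Alph L))"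
    unfolding minimal_dfa_def by blast
  with card_states_quotient_dfa[OF assms(2)] show ?thesis by simp
qed

lemma ntrans_le_card_states_mult:
  assumes "is_dfa Alph M" "finite Alph"
  shows "ntrans M \<le> card (states M) * card Alph"
proof -
  have "{(q, a). q \<in> states M \<and> delta M q a \<noteq> None} \<subseteq> states M \<times> Alph"
    using assms(1) unfolding is_dfa_def by auto
  moreover have "finite (states M \<times> Alph)" using assms unfolding is_dfa_def by simp
  ultimately have "ntrans M \<le> card (states M \<times> Alph)" unfolding ntrans_def by (rule card_mono[rotated])
  then show ?thesis by (simp add: card_cartesian_product)
qed

lemma delta_star_append:
  "delta_star M q (x @ y) = (case delta_star M q x of None \<Rightarrow> None | Some q' \<Rightarrow> delta_star M q' y)"
  by (induction x arbitrary: q) (auto split: option.splits)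

lemma delta_star_in_states:
  assumes "is_dfa Alph M"
  shows "q \<in> states M \<Longrightarrow> delta_star M q w = Some q' \<Longrightarrow> q' \<in> states M"
proof (induction w arbitrary: q)
  case (Cons a w)
  then obtain p where "delta M q a = Some p" "delta_star M p w = Some q'"
    by (auto split: option.splits)
  with Cons assms show ?case unfolding is_dfa_def by blast
qed simp

lemma lquot_eq_if_delta_star_eq:
  assumes "delta_star M (init M) x = Some q" "delta_star M (init M) x' = Some q"
  shows "lquot (dfa_lang M) x = lquot (dfa_lang M) x'"
  using assms by (simp add: lquot_def dfa_lang_def delta_star_append)

lemma accepted_prefix_transition:
  assumes "is_dfa Alph M" "x @ a # y \<in> dfa_lang M"
  obtains q where "delta_star M (init M) x = Some q" "q \<in> states M" "delta M q a \<noteq> None"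
proof -
  obtain p where "delta_star M (init M) (x @ a # y) = Some p"
    using assms(2) unfolding dfa_lang_def by blast
  then obtain q where q: "delta_star M (init M) x = Some q" and "delta_star M q (a # y) = Some p"
    by (cases "delta_star M (init M) x") (simp_all add: delta_star_append)
  moreover from this(2) have "delta M q a \<noteq> None" by (cases "delta M q a") simp_all
  moreover have "q \<in> states M"
    using delta_star_in_states[OF assms(1) _ q] assms(1) unfolding is_dfa_def by blast
  ultimately show ?thesis using that by blast
qed

text \<open>Lower bound by a fooling set: each pair \<open>(x, a)\<close> of \<open>P\<close> needs the transition on \<open>a\<close> out
  of the state reached by \<open>x\<close>, and these transitions are distinct.\<close>
lemma card_le_ntrans:
  assumes dfa: "is_dfa Alph M" and "finite Alph"
    and extends: "\<And>x a. (x, a) \<in> P \<Longrightarrow> \<exists>y. x @ a # y \<in> dfa_lang M"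
    and separated: "\<And>x x' a. (x, a) \<in> P \<Longrightarrow> (x', a) \<in> P \<Longrightarrow>
      lquot (dfa_lang M) x = lquot (dfa_lang M) x' \<Longrightarrow> x = x'"
  shows "card P \<le> ntrans M"
proof -
  define T where "T = {(q, a). q \<in> states M \<and> delta M q a \<noteq> None}"
  define h :: "'a list \<times> 'a \<Rightarrow> nat \<times> 'a" where "h = (\<lambda>(x, a). (the (delta_star M (init M) x), a))"
  have run: "\<exists>q. delta_star M (init M) x = Some q \<and> q \<in> states M \<and> delta M q a \<noteq> None"
    if "(x, a) \<in> P" for x a
    using extends[OF that] accepted_prefix_transition[OF dfa] by metis
  have "inj_on h P"
  proof (rule inj_onI)
    fix u v assume uv: "u \<in> P" "v \<in> P" "h u = h v"
    obtain x a where u: "u = (x, a)" by (cases u)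
    obtain x' a' where v: "v = (x', a')" by (cases v)
    obtain q where q: "delta_star M (init M) x = Some q" using run uv(1) u by blast
    obtain q' where q': "delta_star M (init M) x' = Some q'" using run uv(2) v by blast
    from uv(3) q q' u v have "q = q'" "a = a'" by (simp_all add: h_def)
    have "lquot (dfa_lang M) x = lquot (dfa_lang M) x'"
      using lquot_eq_if_delta_star_eq[OF q] q' \<open>q = q'\<close> by blast
    with separated uv(1,2) have "x = x'" unfolding u v \<open>a = a'\<close> .
    with u v \<open>a = a'\<close> show "u = v" by simp
  qed
  then have "card P = card (h ` P)" by (simp add: card_image)
  also have "\<dots> \<le> card T"
  proof (rule card_mono)
    have "T \<subseteq> states M \<times> Alph" using dfa unfolding T_def is_dfa_def by auto
    with dfa \<open>finite Alph\<close> show "finite T" unfolding is_dfa_def by (simp add: finite_subset)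
    show "h ` P \<subseteq> T"
    proof
      fix z assume "z \<in> h ` P"
      then obtain x a where "(x, a) \<in> P" "z = h (x, a)" by auto
      with run[of x a] show "z \<in> T" unfolding h_def T_def by auto
    qed
  qed
  finally show ?thesis unfolding ntrans_def T_def .
qed

section \<open>Languages of trie paths\<close>

definition path_lang ::
    "'v set \<Rightarrow> 'v \<Rightarrow> ('v \<Rightarrow> 'v) \<Rightarrow> ('v \<Rightarrow> 'a) \<Rightarrow> 'v set \<Rightarrow> ('v \<Rightarrow> bool) \<Rightarrow> 'a list set" where
  "path_lang V r par lab S P = {s. \<exists>u\<in>S. \<exists>w. tpath V r par lab u w s \<and> P w}"

definition end_nodes :: "'v set \<Rightarrow> 'v \<Rightarrow> ('v \<Rightarrow> 'v) \<Rightarrow> ('v \<Rightarrow> 'a) \<Rightarrow> 'a list \<Rightarrow> 'v set" where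
  "end_nodes V r par lab x = {v. \<exists>u. tpath V r par lab u v x}"

lemma Substr_eq_path_lang: "Substr V r par lab = path_lang V r par lab V (\<lambda>_. True)"
  unfolding Substr_def path_lang_def by (auto dest: tpath_nodes)

lemma Suffix_eq_path_lang: "Suffix V r par lab = path_lang V r par lab V (is_leaf V r par)"
  unfolding Suffix_def path_lang_def by (auto dest: tpath_nodes)

lemma Suffix_subset_path_lang:
  "(\<And>w. is_leaf V r par w \<Longrightarrow> P w) \<Longrightarrow> Suffix V r par lab \<subseteq> path_lang V r par lab V P"
  unfolding Suffix_def path_lang_def by (auto dest: tpath_nodes)

lemma path_lang_subset_Substr: "path_lang V r par lab V P \<subseteq> Substr V r par lab"
  unfolding Substr_def path_lang_def by auto

lemma path_lang_in_lists: "is_trie Alph V r par lab \<Longrightarrow> path_lang V r par lab S P \<subseteq> lists Alph"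
  unfolding path_lang_def by (auto dest: tpath_in_lists)

lemma lquot_path_lang:
  "lquot (path_lang V r par lab V P) x = path_lang V r par lab (end_nodes V r par lab x) P"
proof (intro set_eqI iffI)
  fix y assume "y \<in> lquot (path_lang V r par lab V P) x"
  then obtain u w where "tpath V r par lab u w (x @ y)" "P w"
    unfolding lquot_def path_lang_def by blast
  moreover obtain v where "tpath V r par lab u v x" "tpath V r par lab v w y"
    using tpath_split[OF \<open>tpath V r par lab u w (x @ y)\<close>] by blast
  ultimately show "y \<in> path_lang V r par lab (end_nodes V r par lab x) P"
    unfolding path_lang_def end_nodes_def by blast
next
  fix y assume "y \<in> path_lang V r par lab (end_nodes V r par lab x) P"
  then obtain u v w where uv: "tpath V r par lab u v x" and "tpath V r par lab v w y" "P w"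
    unfolding path_lang_def end_nodes_def by blast
  moreover from this(1,2) have "tpath V r par lab u w (x @ y)" by (rule tpath_append)
  moreover from uv have "u \<in> V" by (auto dest: tpath_nodes)
  ultimately show "y \<in> lquot (path_lang V r par lab V P) x"
    unfolding lquot_def path_lang_def by blast
qed

lemma end_nodes_subset: "end_nodes V r par lab x \<subseteq> V"
  unfolding end_nodes_def by (auto dest: tpath_nodes)

lemma laminar_end_nodes: "laminar (range (end_nodes V r par lab))"
proof -
  have sub: "end_nodes V r par lab y \<subseteq> end_nodes V r par lab x"
    if v: "v \<in> end_nodes V r par lab x" "v \<in> end_nodes V r par lab y"
      and len: "length x \<le> length y" for x y v
  proof -
    from v obtain u u' where "tpath V r par lab u v x" "tpath V r par lab u' v y"
      unfolding end_nodes_def by blast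
    then obtain z where "y = z @ x" using tpath_same_end_suffix len by meson
    show ?thesis
    proof
      fix v' assume "v' \<in> end_nodes V r par lab y"
      then obtain u where "tpath V r par lab u v' (z @ x)" unfolding end_nodes_def \<open>y = z @ x\<close> by blast
      then obtain w where "tpath V r par lab w v' x" using tpath_split[of V r par lab u v' z x] by blast
      then show "v' \<in> end_nodes V r par lab x" unfolding end_nodes_def by blast
    qed
  qed
  show ?thesis unfolding laminar_def
  proof (intro ballI)
    fix S T assume "S \<in> range (end_nodes V r par lab)" "T \<in> range (end_nodes V r par lab)"
    then obtain x y where S: "S = end_nodes V r par lab x" and T: "T = end_nodes V r par lab y" by blast
    show "S \<inter> T = {} \<or> S \<subseteq> T \<or> T \<subseteq> S"
    proof (cases "S \<inter> T = {}")
      case False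
      then obtain v where "v \<in> S" "v \<in> T" by blast
      with sub[of v x y] sub[of v y x] show ?thesis unfolding S T by (meson nat_le_linear)
    qed simp
  qed
qed

text \<open>The nonempty quotients of a path language are determined by the sets of end nodes, which form
  a laminar family over the nodes.\<close>
lemma quotients_path_lang:
  assumes "finite V"
  shows "finite (quotients (path_lang V r par lab V P))"
    and "card (quotients (path_lang V r par lab V P)) \<le> 2 * card V + 1"
proof -
  let ?L = "path_lang V r par lab V P"
  let ?F = "range (end_nodes V r par lab) - {{}}"
  have F: "?F \<subseteq> Pow V - {{}}" using end_nodes_subset[of V r par lab] by auto
  have "finite ?F" by (rule finite_subset[of _ "Pow V"]) (use F assms in auto)
  have "card ?F \<le> 2 * card V"
    using card_laminar_le[OF assms F laminar_subset[OF laminar_end_nodes]] by blast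
  have "quotients ?L \<subseteq> insert ?L ((\<lambda>S. path_lang V r par lab S P) ` ?F)"
  proof
    fix K assume "K \<in> quotients ?L"
    then have "K = ?L \<or> (\<exists>x. K = lquot ?L x \<and> K \<noteq> {})" unfolding quotients_def by blast
    then show "K \<in> insert ?L ((\<lambda>S. path_lang V r par lab S P) ` ?F)"
    proof
      assume "\<exists>x. K = lquot ?L x \<and> K \<noteq> {}"
      then obtain x where "K = lquot ?L x" "K \<noteq> {}" by blast
      then have K: "K = path_lang V r par lab (end_nodes V r par lab x) P" "K \<noteq> {}"
        by (simp_all add: lquot_path_lang)
      then have "end_nodes V r par lab x \<noteq> {}" unfolding path_lang_def by blast
      with K show ?thesis by blast
    qed simp
  qed
  moreover have "finite (insert ?L ((\<lambda>S. path_lang V r par lab S P) ` ?F))"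
    using \<open>finite ?F\<close> by simp
  ultimately show "finite (quotients ?L)" by (rule finite_subset)
  have "card (quotients ?L) \<le> card (insert ?L ((\<lambda>S. path_lang V r par lab S P) ` ?F))"
    by (rule card_mono) fact+
  also have "\<dots> \<le> card ?F + 1"
    using \<open>finite ?F\<close> card_image_le[of ?F "\<lambda>S. path_lang V r par lab S P"]
    by (simp add: card_insert_if)
  finally show "card (quotients ?L) \<le> 2 * card V + 1" using \<open>card ?F \<le> 2 * card V\<close> by linarith
qed

lemma minimal_dfa_path_lang_exists:
  assumes "is_trie Alph V r par lab"
  shows "\<exists>M. minimal_dfa Alph (path_lang V r par lab V P) M"
proof -
  have "finite V" using assms by (simp add: is_trie_def)
  then have fin: "finite (quotients (path_lang V r par lab V P))" by (rule quotients_path_lang(1))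
  show ?thesis
    by (rule minimal_dfa_exists[OF is_dfa_quotient_dfa[OF fin]
          dfa_lang_quotient_dfa[OF fin path_lang_in_lists[OF assms]]])
qed

lemma ntrans_minimal_dfa_path_lang_le:
  assumes "finite Alph" "is_trie Alph V r par lab" "minimal_dfa Alph (path_lang V r par lab V P) M"
  shows "ntrans M \<le> 3 * card Alph * card V"
proof -
  have "finite V" "r \<in> V" using assms(2) by (simp_all add: is_trie_def)
  then have "card V \<ge> 1" by (auto simp: Suc_le_eq card_gt_0_iff)
  have "ntrans M \<le> card (states M) * card Alph"
    using assms(3) ntrans_le_card_states_mult[OF _ assms(1)] by (simp add: minimal_dfa_def)
  also have "card (states M) \<le> card (quotients (path_lang V r par lab V P))"
    using card_states_minimal_dfa_le[OF assms(3) quotients_path_lang(1)[OF \<open>finite V\<close>]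
        path_lang_in_lists[OF assms(2)]] .
  also have "\<dots> \<le> 3 * card V"
    using quotients_path_lang(2)[OF \<open>finite V\<close>, of r par lab P] \<open>card V \<ge> 1\<close> by linarith
  finally show ?thesis by (simp add: mult_ac)
qed

section \<open>The broom\<close>

text \<open>The broom: a handle \<open>0 - 1 - \<dots> - m\<close> with all edges labelled \<open>0\<close>, and \<open>s\<close> bristles
  \<open>m + c\<close> (\<open>1 \<le> c \<le> s\<close>) hanging from \<open>m\<close>, the edge to \<open>m + c\<close> labelled \<open>c\<close>.\<close>
definition broom_par :: "nat \<Rightarrow> nat \<Rightarrow> nat" where
  "broom_par m v = (if v \<le> m then v - 1 else m)"

definition broom_lab :: "nat \<Rightarrow> nat \<Rightarrow> nat" where
  "broom_lab m v = (if v \<le> m then 0 else v - m)"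

abbreviation broom_path :: "nat \<Rightarrow> nat \<Rightarrow> nat \<Rightarrow> nat \<Rightarrow> nat list \<Rightarrow> bool" where
  "broom_path m s \<equiv> tpath {0..<Suc (m + s)} 0 (broom_par m) (broom_lab m)"

lemma funpow_broom_par: "v \<le> m \<Longrightarrow> (broom_par m ^^ k) v = v - k"
  by (induction k) (auto simp: broom_par_def)

lemma is_trie_broom:
  assumes "s < \<sigma>"
  shows "is_trie {0..<\<sigma>} {0..<Suc (m + s)} 0 (broom_par m) (broom_lab m)"
  unfolding is_trie_def
proof (intro conjI ballI impI)
  fix v assume v: "v \<in> {0..<Suc (m + s)}"
  show "\<exists>k. (broom_par m ^^ k) v = 0"
  proof (cases "v \<le> m")
    case True
    then show ?thesis using funpow_broom_par[OF True, of v] by (metis diff_self_eq_0)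
  next
    case False
    have "(broom_par m ^^ Suc m) v = (broom_par m ^^ m) (broom_par m v)"
      by (simp only: funpow_Suc_right comp_apply)
    also have "\<dots> = (broom_par m ^^ m) m" using False by (simp add: broom_par_def)
    also have "\<dots> = 0" by (simp add: funpow_broom_par)
    finally show ?thesis by blast
  qed
  assume "v \<noteq> 0"
  with v assms show "broom_par m v \<in> {0..<Suc (m + s)}" "broom_lab m v \<in> {0..<\<sigma>}"
    by (auto simp: broom_par_def broom_lab_def)
qed (auto simp: broom_par_def broom_lab_def split: if_splits)

lemma broom_path_handle: "j \<le> k \<Longrightarrow> k \<le> m \<Longrightarrow> broom_path m s j k (replicate (k - j) 0)"
proof (induction k)
  case 0
  then show ?case by (auto intro: tpath.refl)
next
  case (Suc k)
  show ?case
  proof (cases "j = Suc k")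
    case False
    have "broom_par m (Suc k) = k" using Suc.prems by (simp add: broom_par_def)
    with Suc False have "broom_path m s j (broom_par m (Suc k)) (replicate (k - j) 0)" by simp
    then have "broom_path m s j (Suc k) (replicate (k - j) 0 @ [broom_lab m (Suc k)])"
      using Suc.prems by (intro tpath.step) auto
    moreover have "broom_lab m (Suc k) = 0" using Suc.prems by (simp add: broom_lab_def)
    moreover have "replicate (k - j) 0 @ [0] = replicate (Suc k - j) (0::nat)"
      using Suc.prems False by (simp add: Suc_diff_le replicate_append_same)
    ultimately show ?thesis by simp
  qed (use Suc.prems in \<open>auto intro: tpath.refl\<close>)
qed

lemma broom_path_bristle:
  assumes "1 \<le> c" "c \<le> s" "i \<le> m"
  shows "broom_path m s (m - i) (m + c) (replicate i 0 @ [c])"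
proof -
  have "broom_path m s (m - i) (broom_par m (m + c)) (replicate i 0)"
    using broom_path_handle[of "m - i" m m s] assms by (simp add: broom_par_def)
  then have "broom_path m s (m - i) (m + c) (replicate i 0 @ [broom_lab m (m + c)])"
    using assms by (intro tpath.step) auto
  with assms show ?thesis by (simp add: broom_lab_def)
qed

lemma is_leaf_broom_bristle: "1 \<le> c \<Longrightarrow> c \<le> s \<Longrightarrow> is_leaf {0..<Suc (m + s)} 0 (broom_par m) (m + c)"
  unfolding is_leaf_def broom_par_def by auto

lemma broom_path_zeros:
  "broom_path m s u v w \<Longrightarrow> set w \<subseteq> {0} \<Longrightarrow> length w \<le> v \<and> (w \<noteq> [] \<longrightarrow> v \<le> m)"
proof (induction rule: tpath.induct)
  case (step u v w)
  then have "v \<le> m" "v \<noteq> 0" by (auto simp: broom_lab_def split: if_splits)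
  moreover from this have "broom_par m v = v - 1" by (simp add: broom_par_def)
  ultimately show ?case using step by auto
qed simp

lemma replicate_in_Substr_broom:
  assumes "replicate k 0 @ y \<in> Substr {0..<Suc (m + s)} 0 (broom_par m) (broom_lab m)"
  shows "k \<le> m"
proof -
  from assms obtain u w where uw: "broom_path m s u w (replicate k 0 @ y)" unfolding Substr_def by blast
  obtain v where "broom_path m s u v (replicate k 0)" using tpath_split[OF uw] by blast
  from broom_path_zeros[OF this] have "k \<le> v \<and> (k \<noteq> 0 \<longrightarrow> v \<le> m)"
    by (simp add: set_replicate_conv_if)
  then show ?thesis by linarith
qed

lemma handle_in_Suffix_broom:
  "\<exists>y. replicate m 0 @ y \<in> Suffix {0..<Suc (m + s)} 0 (broom_par m) (broom_lab m)"
proof (cases "s = 0")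
  case True
  have "broom_path m s 0 m (replicate m 0)" using broom_path_handle[of 0 m m s] by simp
  moreover have "is_leaf {0..<Suc (m + s)} 0 (broom_par m) m"
    using True unfolding is_leaf_def broom_par_def by auto
  ultimately have "replicate m 0 @ [] \<in> Suffix {0..<Suc (m + s)} 0 (broom_par m) (broom_lab m)"
    unfolding Suffix_def by auto
  then show ?thesis by blast
next
  case False
  then have "replicate m 0 @ [1] \<in> Suffix {0..<Suc (m + s)} 0 (broom_par m) (broom_lab m)"
    using broom_path_bristle[of 1 s m m] is_leaf_broom_bristle[of 1 s m] unfolding Suffix_def by auto
  then show ?thesis by blast
qed

lemma lquot_replicate_broom_neq:
  fixes L :: "nat list set"
  assumes "Suffix {0..<Suc (m + s)} 0 (broom_par m) (broom_lab m) \<subseteq> L"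
    and "L \<subseteq> Substr {0..<Suc (m + s)} 0 (broom_par m) (broom_lab m)"
    and "i < i'" "i' \<le> m"
  shows "lquot L (replicate i 0) \<noteq> lquot L (replicate i' 0)"
proof
  assume eq: "lquot L (replicate i 0) = lquot L (replicate i' 0)"
  obtain y where "replicate m 0 @ y \<in> L" using handle_in_Suffix_broom assms(1) by blast
  moreover have "replicate i 0 @ replicate (m - i) 0 @ y = replicate m 0 @ y"
    using assms(3,4) by (simp flip: replicate_add)
  ultimately have "replicate (m - i) 0 @ y \<in> lquot L (replicate i 0)"
    unfolding lquot_def by (metis mem_Collect_eq)
  with eq have "replicate (i' + (m - i)) 0 @ y \<in> L" by (simp add: lquot_def replicate_add)
  with assms(2) have "i' + (m - i) \<le> m" using replicate_in_Substr_broom by blast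
  with assms(3,4) show False by linarith
qed

text \<open>A fooling set: the words \<open>0\<^sup>i c\<close> with \<open>i \<le> m\<close>, \<open>c \<le> s\<close> and \<open>(i, c) \<noteq> (m, 0)\<close> all occur,
  and the prefixes \<open>0\<^sup>i\<close> reach distinct states.\<close>
lemma ntrans_broom_ge:
  assumes "Suffix {0..<Suc (m + s)} 0 (broom_par m) (broom_lab m) \<subseteq> dfa_lang M"
    and "dfa_lang M \<subseteq> Substr {0..<Suc (m + s)} 0 (broom_par m) (broom_lab m)"
    and "is_dfa Alph M" "finite Alph"
  shows "(m + 1) * (s + 1) - 1 \<le> ntrans M"
proof -
  define I where "I = {..m} \<times> {..s} - {(m, 0)}"
  define P where "P = (\<lambda>(i, c). (replicate i (0::nat), c)) ` I"
  have "card P = card I"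
    unfolding P_def by (rule card_image) (auto simp: inj_on_def)
  also have "\<dots> = (m + 1) * (s + 1) - 1"
    unfolding I_def by (simp add: card_Diff_singleton card_cartesian_product)
  finally have "card P = (m + 1) * (s + 1) - 1" .
  moreover have "card P \<le> ntrans M"
  proof (rule card_le_ntrans[OF assms(3,4)])
    fix x a assume "(x, a) \<in> P"
    then obtain i where "(i, a) \<in> I" and x: "x = replicate i 0" unfolding P_def by auto
    then have i: "i \<le> m" "a \<le> s" "(i, a) \<noteq> (m, 0)" unfolding I_def by auto
    show "\<exists>y. x @ a # y \<in> dfa_lang M"
    proof (cases "a = 0")
      case True
      with i have "i < m" by auto
      obtain y where "replicate m 0 @ y \<in> dfa_lang M" using handle_in_Suffix_broom assms(1) by blast
      moreover obtain k where "m = Suc (i + k)" using \<open>i < m\<close> less_iff_Suc_add by auto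
      ultimately have "x @ a # replicate k 0 @ y \<in> dfa_lang M"
        using x True by (simp add: replicate_add replicate_app_Cons_same)
      then show ?thesis by blast
    next
      case False
      then have "x @ [a] \<in> Suffix {0..<Suc (m + s)} 0 (broom_par m) (broom_lab m)"
        using broom_path_bristle[of a s i m] is_leaf_broom_bristle[of a s m] i x
        unfolding Suffix_def by auto
      with assms(1) show ?thesis by blast
    qed
  next
    fix x x' a assume "(x, a) \<in> P" "(x', a) \<in> P" and eq: "lquot (dfa_lang M) x = lquot (dfa_lang M) x'"
    then obtain i i' where "x = replicate i 0" "x' = replicate i' 0" "i \<le> m" "i' \<le> m"
      unfolding P_def I_def by auto
    with eq lquot_replicate_broom_neq[OF assms(1,2)] show "x = x'" by (metis linorder_neqE_nat)
  qed
  ultimately show ?thesis by simp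
qed

text \<open>Choosing \<open>s = min (\<sigma> - 1) (n div 2)\<close> makes both \<open>m + 1\<close> and \<open>s + 1\<close> at least half their
  targets \<open>n\<close> and \<open>\<sigma>\<close>.\<close>
lemma broom_dimensions:
  fixes \<sigma> n :: nat
  assumes "2 \<le> n" "1 \<le> \<sigma>" "\<sigma> \<le> n"
  obtains m s where "Suc (m + s) = n" "s < \<sigma>" "\<sigma> * n \<le> 8 * ((m + 1) * (s + 1) - 1)"
proof -
  define s where "s = min (\<sigma> - 1) (n div 2)"
  define m where "m = n - 1 - s"
  have "2 * (n div 2) \<le> n" "n \<le> 2 * (n div 2) + 1" by auto
  moreover have "s \<le> \<sigma> - 1" "s \<le> n div 2" "s = \<sigma> - 1 \<or> s = n div 2" unfolding s_def by auto
  ultimately have n: "Suc (m + s) = n" "n \<le> 2 * (m + 1)" and \<sigma>: "s < \<sigma>" "\<sigma> \<le> 2 * (s + 1)"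
    using assms unfolding m_def by auto
  have "\<sigma> * n \<le> (2 * (s + 1)) * (2 * (m + 1))" using mult_le_mono[OF \<sigma>(2) n(2)] .
  also have "\<dots> = 4 * ((m + 1) * (s + 1))" by (simp add: algebra_simps)
  finally have "\<sigma> * n \<le> 4 * ((m + 1) * (s + 1))" .
  moreover have "(m + 1) * (s + 1) \<ge> 2" using n(1) assms(1) by (cases s) auto
  ultimately have "\<sigma> * n \<le> 8 * ((m + 1) * (s + 1) - 1)" by linarith
  with n(1) \<sigma>(1) show ?thesis by (rule that)
qed

lemma ntrans_lower_bound_path_lang:
  fixes Lang :: "nat set \<Rightarrow> nat \<Rightarrow> (nat \<Rightarrow> nat) \<Rightarrow> (nat \<Rightarrow> nat) \<Rightarrow> nat list set"
  assumes Lang: "\<And>V r par lab. Lang V r par lab = path_lang V r par lab V (P V r par lab)"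
    and leaves: "\<And>V r par lab w. is_leaf V r par w \<Longrightarrow> P V r par lab w"
  shows "\<exists>c::real. c > 0 \<and> (\<forall>\<sigma> n::nat. 2 \<le> n \<and> 1 \<le> \<sigma> \<and> \<sigma> \<le> n \<longrightarrow>
    (\<exists>(Alph::nat set) (V::nat set) r par lab.
      finite Alph \<and> card Alph = \<sigma> \<and> is_trie Alph V r par lab \<and> card V = n \<and>
      (\<exists>M. minimal_dfa Alph (Lang V r par lab) M) \<and>
      (\<forall>M. minimal_dfa Alph (Lang V r par lab) M \<longrightarrow> c * real \<sigma> * real n \<le> real (ntrans M))))"
proof (intro exI[of _ "1 / 8"] conjI allI impI)
  fix \<sigma> n :: nat
  assume "2 \<le> n \<and> 1 \<le> \<sigma> \<and> \<sigma> \<le> n"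
  then have "2 \<le> n" "1 \<le> \<sigma>" "\<sigma> \<le> n" by simp_all
  then obtain m s where ms: "Suc (m + s) = n" "s < \<sigma>" "\<sigma> * n \<le> 8 * ((m + 1) * (s + 1) - 1)"
    by (rule broom_dimensions)
  let ?V = "{0..<Suc (m + s)}" and ?L = "Lang {0..<Suc (m + s)} 0 (broom_par m) (broom_lab m)"
  have trie: "is_trie {0..<\<sigma>} ?V 0 (broom_par m) (broom_lab m)" using is_trie_broom[OF ms(2)] .
  have Suffix_L: "Suffix ?V 0 (broom_par m) (broom_lab m) \<subseteq> ?L"
    unfolding Lang by (rule Suffix_subset_path_lang) (rule leaves)
  have L_Substr: "?L \<subseteq> Substr ?V 0 (broom_par m) (broom_lab m)"
    unfolding Lang by (rule path_lang_subset_Substr)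
  have low: "1 / 8 * real \<sigma> * real n \<le> real (ntrans M)" if "minimal_dfa {0..<\<sigma>} ?L M" for M
  proof -
    have "is_dfa {0..<\<sigma>} M" "dfa_lang M = ?L" using that unfolding minimal_dfa_def by auto
    then have "(m + 1) * (s + 1) - 1 \<le> ntrans M"
      using ntrans_broom_ge[of m s M "{0..<\<sigma>}"] Suffix_L L_Substr by simp
    with ms(3) have "real (\<sigma> * n) \<le> real (8 * ntrans M)" by linarith
    then show ?thesis by simp
  qed
  have ex: "\<exists>M. minimal_dfa {0..<\<sigma>} ?L M" unfolding Lang by (rule minimal_dfa_path_lang_exists[OF trie])
  show "\<exists>(Alph::nat set) (V::nat set) r par lab.
      finite Alph \<and> card Alph = \<sigma> \<and> is_trie Alph V r par lab \<and> card V = n \<and>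
      (\<exists>M. minimal_dfa Alph (Lang V r par lab) M) \<and>
      (\<forall>M. minimal_dfa Alph (Lang V r par lab) M \<longrightarrow> 1 / 8 * real \<sigma> * real n \<le> real (ntrans M))"
    by (intro exI[of _ "{0..<\<sigma>}"] exI[of _ ?V] exI[of _ 0] exI[of _ "broom_par m"]
        exI[of _ "broom_lab m"] conjI allI impI finite_atLeastLessThan trie ex low)
      (simp_all add: ms(1))
qed simp

lemma ntrans_upper_bound_path_lang:
  fixes Lang :: "'v set \<Rightarrow> 'v \<Rightarrow> ('v \<Rightarrow> 'v) \<Rightarrow> ('v \<Rightarrow> 'a) \<Rightarrow> 'a list set"
  assumes Lang: "\<And>V r par lab. Lang V r par lab = path_lang V r par lab V (P V r par lab)"
  shows "\<exists>C::real. \<forall>(Alph::'a set) V r par lab M.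
    finite Alph \<and> is_trie Alph V r par lab \<and> minimal_dfa Alph (Lang V r par lab) M
      \<longrightarrow> real (ntrans M) \<le> C * real (card Alph) * real (card V)"
proof (intro exI[of _ 3] allI impI)
  fix Alph :: "'a set" and V :: "'v set" and r par lab M
  assume "finite Alph \<and> is_trie Alph V r par lab \<and> minimal_dfa Alph (Lang V r par lab) M"
  then have "ntrans M \<le> 3 * card Alph * card V"
    using ntrans_minimal_dfa_path_lang_le[of Alph V r par lab "P V r par lab" M] by (simp add: Lang)
  then have "real (ntrans M) \<le> real (3 * card Alph * card V)" by (simp only: of_nat_le_iff)
  then show "real (ntrans M) \<le> 3 * real (card Alph) * real (card V)" by simp
qed

theorem theorem7:
  shows
  "(\<exists>C::real. \<forall>(Alph::'a set) (V::'v set) r par lab M.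
       finite Alph \<and> is_trie Alph V r par lab \<and> minimal_dfa Alph (Suffix V r par lab) M
       \<longrightarrow> real (ntrans M) \<le> C * real (card Alph) * real (card V))
 \<and> (\<exists>C::real. \<forall>(Alph::'a set) (V::'v set) r par lab M.
       finite Alph \<and> is_trie Alph V r par lab \<and> minimal_dfa Alph (Substr V r par lab) M
       \<longrightarrow> real (ntrans M) \<le> C * real (card Alph) * real (card V))
 \<and> (\<exists>c::real. c > 0 \<and> (\<forall>\<sigma> n::nat. 2 \<le> n \<and> 1 \<le> \<sigma> \<and> \<sigma> \<le> n \<longrightarrow>
       (\<exists>(Alph::nat set) (V::nat set) r par lab.
          finite Alph \<and> card Alph = \<sigma> \<and> is_trie Alph V r par lab \<and> card V = n \<and>
          (\<exists>M. minimal_dfa Alph (Suffix V r par lab) M) \<and>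
          (\<forall>M. minimal_dfa Alph (Suffix V r par lab) M
               \<longrightarrow> c * real \<sigma> * real n \<le> real (ntrans M)))))
 \<and> (\<exists>c::real. c > 0 \<and> (\<forall>\<sigma> n::nat. 2 \<le> n \<and> 1 \<le> \<sigma> \<and> \<sigma> \<le> n \<longrightarrow>
       (\<exists>(Alph::nat set) (V::nat set) r par lab.
          finite Alph \<and> card Alph = \<sigma> \<and> is_trie Alph V r par lab \<and> card V = n \<and>
          (\<exists>M. minimal_dfa Alph (Substr V r par lab) M) \<and>
          (\<forall>M. minimal_dfa Alph (Substr V r par lab) M
               \<longrightarrow> c * real \<sigma> * real n \<le> real (ntrans M)))))"
  by (intro conjI ntrans_upper_bound_path_lang[OF Suffix_eq_path_lang]
      ntrans_upper_bound_path_lang[OF Substr_eq_path_lang]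
      ntrans_lower_bound_path_lang[OF Suffix_eq_path_lang]
      ntrans_lower_bound_path_lang[OF Substr_eq_path_lang]) simp_all

end
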